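(* If $B\subset\mathbb{R}$ has the Baire property, then the characteristic function $\chi_B$ of $B$ is the pointwise limit of a sequence of Świątkowski functions.
   Context: $\mathrm{C}(f)$ denotes the set of continuity points of $f$. $f\colon\mathbb{R}\to\mathbb{R}$ is a Świątkowski function if for all $a<b$ with $f(a)\ne f(b)$ there is $x\in(a,b)\cap\mathrm{C}(f)$ with $f(x)$ strictly between $f(a)$ and $f(b)$. A set has the Baire property if it is of the form $O\triangle M$ with $O$ open and $M$ meager. *)

theory Defs
  imports "HOL-Analysis.Analysis"
begin

definition cont_points :: "(real \<Rightarrow> real) \<Rightarrow> real set" where
  "cont_points f = {x. isCont f x}"

definition swiatkowski :: "(real \<Rightarrow> real) \<Rightarrow> bool" where
  "swiatkowski f \<longleftrightarrow>
     (\<forall>a b. a < b \<and> f a \<noteq> f b \<longrightarrow>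
        (\<exists>x\<in>{a<..<b} \<inter> cont_points f.
           min (f a) (f b) < f x \<and> f x < max (f a) (f b)))"

definition nowhere_dense :: "'a::topological_space set \<Rightarrow> bool" where
  "nowhere_dense S \<longleftrightarrow> interior (closure S) = {}"

definition meager :: "'a::topological_space set \<Rightarrow> bool" where
  "meager M \<longleftrightarrow> (\<exists>F. countable F \<and> (\<forall>N\<in>F. nowhere_dense N) \<and> M = \<Union>F)"

definition baire_property :: "'a::topological_space set \<Rightarrow> bool" where
  "baire_property B \<longleftrightarrow> (\<exists>U M. open U \<and> meager M \<and> B = (U - M) \<union> (M - U))"

end

theory Submission
  imports Defs "HOL-Real_Asymp.Real_Asymp"
begin

text \<open>
  Write B = U \<Delta> M with U open and M meager, and cover M by an increasing sequence of closed
  nowhere dense sets N_n containing the frontier of U. The n-th function equals the indicator of B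
  on N_n; off N_n it is e_n \<cdot> osc(d(x, N_n)) outside U and 1 - e_n \<cdot> osc(d(x, N_n)) inside U,
  where osc t = sin^2(1/t) / (1 + t) and e_n \<longrightarrow> 0. It is continuous off N_n and within e_n of the
  indicator of U there, which agrees with that of B off M; this gives pointwise convergence.
  Because osc oscillates between 0 and almost 1 near 0, on every gap of N_n the function sweeps
  out the whole band [0, e_n) or (1 - e_n, 1] that contains its values near the gap, so
  intermediate values are always attained at continuity points.
\<close>

lemma meager_subset_incseq_closed:
  fixes M :: "'a::topological_space set"
  assumes "meager M"
  obtains P where "incseq P" "\<And>n. closed (P n)" "\<And>n. interior (P n) = {}"
    "M \<subseteq> (\<Union>n. P n)"
proof -
  obtain F where F: "countable F" "\<And>S. S \<in> F \<Longrightarrow> nowhere_dense S" "M = \<Union>F"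
    using assms unfolding meager_def by blast
  define D where "D = from_nat_into (insert {} F)"
  have range_D: "range D = insert {} F"
    unfolding D_def using F(1) by simp
  have interior_D: "interior (closure (D k)) = {}" for k
    using range_D F(2) unfolding nowhere_dense_def by (metis closure_empty insertE interior_empty rangeI)
  define P where "P n = (\<Union>k\<le>n. closure (D k))" for n
  have "incseq P"
    unfolding P_def incseq_def by (fastforce intro: order_trans)
  moreover have "closed (P n)" for n
    unfolding P_def by auto
  moreover have "interior (P n) = {}" for n
  proof (induction n)
    case 0
    then show ?case unfolding P_def using interior_D by simp
  next
    case (Suc n)
    have "P (Suc n) = closure (D (Suc n)) \<union> P n"
      unfolding P_def by (auto simp: atMost_Suc)
    then show ?case
      using interior_closed_Un_empty_interior[of "closure (D (Suc n))" "P n"] Suc interior_D by simp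
  qed
  moreover have "M \<subseteq> (\<Union>n. P n)"
  proof
    fix x assume "x \<in> M"
    then obtain S where "S \<in> F" "x \<in> S"
      using F(3) by blast
    moreover obtain k where "S = D k"
      using range_D \<open>S \<in> F\<close> by (metis insertI2 rangeE)
    ultimately have "x \<in> P k"
      using closure_subset unfolding P_def by blast
    then show "x \<in> (\<Union>n. P n)"
      by blast
  qed
  ultimately show ?thesis using that by blast
qed

lemma interior_frontier_open:
  assumes "open U"
  shows "interior (frontier U) = {}"
  using assms interior_subset[of "closure U"]
  by (auto simp: frontier_def interior_open interior_diff)

text \<open>Dividing by 1 + t keeps osc strictly below 1, so the bands used below are half-open and
  every value off N lies strictly inside the range swept out on a neighbouring gap.\<close>

definition osc :: "real \<Rightarrow> real" where
  "osc t = (sin (1 / t))^2 / (1 + t)"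

lemma osc_bounds: "t > 0 \<Longrightarrow> osc t \<in> {0..<1}"
  using abs_square_le_1[of "sin (1 / t)"] by (auto simp: osc_def divide_simps)

lemma continuous_on_osc: "continuous_on {0<..} osc"
  unfolding osc_def by (intro continuous_intros) auto

lemma osc_image:
  assumes "\<delta> > 0"
  shows "osc ` {0<..<\<delta>} = {0..<1}"
proof
  show "osc ` {0<..<\<delta>} \<subseteq> {0..<1}"
    using osc_bounds by auto
next
  define zero where "zero k = 1 / (real (Suc k) * pi)" for k
  define peak where "peak k = 1 / (2 * real k * pi + pi / 2)" for k
  have osc_zero: "osc (zero k) = 0" for k
    using sin_npi[of "Suc k"] by (simp add: osc_def zero_def)
  have osc_peak: "osc (peak k) = 1 / (1 + peak k)" for k
  proof -
    have "sin (1 / peak k) = sin (pi / 2 + real (2 * k) * pi)"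
      by (simp add: peak_def algebra_simps)
    then show ?thesis by (simp add: osc_def sin_add)
  qed
  have "zero \<longlonglongrightarrow> 0" "peak \<longlonglongrightarrow> 0"
    unfolding zero_def peak_def by real_asymp+
  then have "(\<lambda>k. osc (peak k)) \<longlonglongrightarrow> 1"
    unfolding osc_peak by (auto intro!: tendsto_eq_intros)
  show "{0..<1} \<subseteq> osc ` {0<..<\<delta>}"
  proof
    fix c :: real
    assume c: "c \<in> {0..<1}"
    have "eventually (\<lambda>k. zero k < \<delta> \<and> peak k < \<delta> \<and> c < osc (peak k)) sequentially"
      using \<open>zero \<longlonglongrightarrow> 0\<close> \<open>peak \<longlonglongrightarrow> 0\<close> \<open>(\<lambda>k. osc (peak k)) \<longlonglongrightarrow> 1\<close> c assms
      by (intro eventually_conj order_tendstoD) auto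
    then obtain k where k: "zero k < \<delta>" "peak k < \<delta>" "c < osc (peak k)"
      by (auto simp: eventually_sequentially)
    have pos: "zero k > 0" "peak k > 0"
      unfolding zero_def peak_def by (auto intro: add_nonneg_pos)
    have "connected (osc ` {0<..<\<delta>})"
      by (rule connected_continuous_image[OF continuous_on_subset[OF continuous_on_osc]]) auto
    then have "{osc (zero k)..osc (peak k)} \<subseteq> osc ` {0<..<\<delta>}"
      by (rule connected_contains_Icc) (use k pos in auto)
    then show "c \<in> osc ` {0<..<\<delta>}"
      using c k osc_zero by auto
  qed
qed

lemma closest_point_between:
  fixes N :: "real set"
  assumes "closed N" "p \<in> N" "w \<notin> N"
  obtains q where "q \<in> N" "q \<in> {min w p..max w p}" "{min w q<..<max w q} \<inter> N = {}"
proof -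
  let ?S = "N \<inter> {min w p..max w p}"
  have "closed ?S" "?S \<noteq> {}"
    using assms by auto
  then obtain q where q: "q \<in> ?S" and closest: "\<And>y. y \<in> ?S \<Longrightarrow> dist w q \<le> dist w y"
    using distance_attains_inf[of ?S w] by blast
  have "z \<notin> N" if z: "z \<in> {min w q<..<max w q}" for z
  proof
    assume "z \<in> N"
    moreover have "z \<in> {min w p..max w p}" "dist w z < dist w q"
      using z q by (auto simp: dist_real_def min_def max_def split: if_splits)
    ultimately show False
      using closest[of z] by simp
  qed
  then show ?thesis
    using that q by blast
qed

lemma osc_infdist_gap_image:
  fixes N :: "real set"
  assumes "closed N" "s < t" "{s<..<t} \<inter> N = {}" "s \<in> N \<or> t \<in> N"
  shows "{0..<1} \<subseteq> (\<lambda>x. osc (infdist x N)) ` {s<..<t}"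
proof -
  define r where "r = infdist ((s + t) / 2) N"
  have "(s + t) / 2 \<in> {s<..<t}"
    using assms by auto
  then have "(s + t) / 2 \<notin> N"
    using assms(3) by blast
  then have "r > 0"
    unfolding r_def using assms by (auto intro!: infdist_pos_not_in_closed)
  have "{0<..<r} \<subseteq> (\<lambda>x. infdist x N) ` {s<..<t}"
  proof
    fix \<tau> assume \<tau>: "\<tau> \<in> {0<..<r}"
    define m where "m = min (\<tau> / 2) ((t - s) / 2)"
    define z where "z = (if s \<in> N then s + m else t - m)"
    have "0 < m" "m < t - s"
      using assms(2) \<tau> by (auto simp: m_def min_def)
    then have "z \<in> {s<..<t}" "infdist z N \<le> m"
      using assms(4) infdist_le[of s N z] infdist_le[of t N z]
      by (auto simp: z_def dist_real_def)
    moreover have "connected ((\<lambda>x. infdist x N) ` {s<..<t})"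
      by (intro connected_continuous_image continuous_intros) auto
    ultimately have "{infdist z N..r} \<subseteq> (\<lambda>x. infdist x N) ` {s<..<t}"
      by (intro connected_contains_Icc) (use assms in \<open>auto simp: r_def\<close>)
    moreover have "infdist z N < \<tau>"
      using \<open>infdist z N \<le> m\<close> \<tau> by (simp add: m_def)
    ultimately show "\<tau> \<in> (\<lambda>x. infdist x N) ` {s<..<t}"
      using \<tau> by auto
  qed
  then have "osc ` {0<..<r} \<subseteq> (\<lambda>x. osc (infdist x N)) ` {s<..<t}"
    by auto
  then show ?thesis
    using osc_image[OF \<open>r > 0\<close>] by simp
qed

locale swiatkowski_approximant =
  fixes N U :: "real set" and e :: real and h :: "real \<Rightarrow> real"
  assumes closed_N: "closed N" and interior_N: "interior N = {}" and N_nonempty: "N \<noteq> {}"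
    and frontier_U: "frontier U \<subseteq> N" and open_U: "open U"
    and e_pos: "0 < e" and e_less_1: "e < 1" and h_01: "\<And>x. h x \<in> {0, 1}"
begin

definition f :: "real \<Rightarrow> real" where
  "f x = (if x \<in> N then h x
          else if x \<in> U then 1 - e * osc (infdist x N) else e * osc (infdist x N))"

definition band :: "real \<Rightarrow> real set" where
  "band x = (if x \<in> U then {1 - e<..1} else {0..<e})"

lemma osc_infdist_bounds: "x \<notin> N \<Longrightarrow> osc (infdist x N) \<in> {0..<1}"
  by (intro osc_bounds infdist_pos_not_in_closed[OF closed_N N_nonempty])

lemma f_in_band: "x \<notin> N \<Longrightarrow> f x \<in> band x"
  using osc_infdist_bounds[of x] e_pos
  by (auto simp: f_def band_def mult_left_le_one_le mult_less_cancel_left1)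

lemma f_in_01: "f x \<in> {0..1}"
  using h_01[of x] f_in_band[of x] e_less_1 by (cases "x \<in> N") (auto simp: f_def band_def)

lemma dist_f_indicator: "x \<notin> N \<Longrightarrow> \<bar>f x - indicator U x\<bar> < e"
  using f_in_band[of x] by (auto simp: band_def indicator_def split: if_splits)

lemma isCont_f:
  assumes "x \<notin> N"
  shows "isCont f x"
proof -
  have "isCont osc (infdist x N)"
    using assms infdist_pos_not_in_closed[OF closed_N N_nonempty]
    by (intro continuous_on_interior[OF continuous_on_osc]) (auto simp: interior_open)
  then have osc_cont: "isCont (\<lambda>y. osc (infdist y N)) x"
    by (rule isCont_o2[rotated]) (intro continuous_intros)
  have "x \<in> U \<or> x \<notin> closure U"
    using assms frontier_U open_U by (auto simp: frontier_def interior_open)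
  then show ?thesis
  proof
    assume "x \<in> U"
    have near: "eventually (\<lambda>y. f y = 1 - e * osc (infdist y N)) (nhds x)"
      unfolding eventually_nhds using \<open>x \<in> U\<close> assms open_U closed_N
      by (intro exI[of _ "U - N"]) (auto simp: f_def)
    show ?thesis
      unfolding isCont_cong[OF near] using osc_cont by (intro continuous_intros)
  next
    assume "x \<notin> closure U"
    have near: "eventually (\<lambda>y. f y = e * osc (infdist y N)) (nhds x)"
      unfolding eventually_nhds using \<open>x \<notin> closure U\<close> assms closed_N closure_subset
      by (intro exI[of _ "- (closure U \<union> N)"]) (auto simp: f_def)
    show ?thesis
      unfolding isCont_cong[OF near] using osc_cont by (intro continuous_intros)
  qed
qed

lemma band_between:
  assumes "u \<in> band w" "v \<in> {0..1}" "u \<noteq> v"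
  shows "\<exists>y\<in>band w. min u v < y \<and> y < max u v"
proof (cases "w \<in> U")
  case True
  then show ?thesis
    using assms by (intro bexI[of _ "(u + max v (1 - e)) / 2"]) (auto simp: band_def min_def max_def)
next
  case False
  then show ?thesis
    using assms by (intro bexI[of _ "(u + min v e) / 2"]) (auto simp: band_def min_def max_def)
qed

lemma band_subset_image_gap:
  assumes "s < t" "{s<..<t} \<inter> N = {}" "s \<in> N \<or> t \<in> N" "w \<in> {s..t}" "w \<notin> N"
  shows "band w \<subseteq> f ` {s<..<t}"
proof -
  have "connected (insert w {s<..<t})"
    using assms(4) by (intro is_interval_connected) (auto simp: is_interval_1)
  moreover have "insert w {s<..<t} \<inter> frontier U = {}"
    using assms(2,5) frontier_U by blast
  ultimately have gap_U: "insert w {s<..<t} \<subseteq> U \<or> insert w {s<..<t} \<inter> U = {}"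
    using connected_Int_frontier by blast
  have osc_gap: "{0..<1} \<subseteq> (\<lambda>x. osc (infdist x N)) ` {s<..<t}"
    using osc_infdist_gap_image[OF closed_N assms(1-3)] .
  show ?thesis
  proof
    fix y assume y: "y \<in> band w"
    show "y \<in> f ` {s<..<t}"
    proof (cases "w \<in> U")
      case True
      then have "(1 - y) / e \<in> {0..<1}"
        using y e_pos by (auto simp: band_def divide_simps)
      then obtain z where z: "(1 - y) / e = osc (infdist z N)" "z \<in> {s<..<t}"
        by (rule imageE[OF subsetD[OF osc_gap]])
      have "z \<in> U" "z \<notin> N"
        using True gap_U z(2) assms(2) by blast+
      then have "f z = y"
        using e_pos z(1)[symmetric] by (simp add: f_def)
      then show ?thesis using z(2) by blast
    next
      case False
      then have "y / e \<in> {0..<1}"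
        using y e_pos by (auto simp: band_def divide_simps)
      then obtain z where z: "y / e = osc (infdist z N)" "z \<in> {s<..<t}"
        by (rule imageE[OF subsetD[OF osc_gap]])
      have "z \<notin> U" "z \<notin> N"
        using False gap_U z(2) assms(2) by blast+
      then have "f z = y"
        using e_pos z(1)[symmetric] by (simp add: f_def)
      then show ?thesis using z(2) by blast
    qed
  qed
qed

lemma intermediate_value_without_N:
  assumes "a < b" "f a \<noteq> f b" "{a..b} \<inter> N = {}"
  shows "\<exists>x\<in>{a<..<b} - N. min (f a) (f b) < f x \<and> f x < max (f a) (f b)"
proof -
  have "continuous_on {a..b} f"
    using assms(3) isCont_f by (intro continuous_at_imp_continuous_on) blast
  then have "connected (f ` {a..b})"
    by (rule connected_continuous_image) simp
  then have "{min (f a) (f b)..max (f a) (f b)} \<subseteq> f ` {a..b}"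
    by (rule connected_contains_Icc) (use assms(1) in \<open>auto simp: min_def max_def\<close>)
  moreover have "(f a + f b) / 2 \<in> {min (f a) (f b)..max (f a) (f b)}"
    by auto
  ultimately have "(f a + f b) / 2 \<in> f ` {a..b}"
    by (rule subsetD)
  then obtain x where x: "f x = (f a + f b) / 2" "x \<in> {a..b}"
    by (metis imageE)
  then have "x \<noteq> a" "x \<noteq> b"
    using assms(2) by auto
  then show ?thesis
    using x assms by (intro bexI[of _ x]) auto
qed

lemma intermediate_value_endpoint_off_N:
  assumes "a < b" "f a \<noteq> f b" "w \<in> {a, b}" "w \<notin> N" "p \<in> N" "p \<in> {a..b}"
  shows "\<exists>x\<in>{a<..<b} - N. min (f a) (f b) < f x \<and> f x < max (f a) (f b)"
proof -
  obtain q where q: "q \<in> N" "q \<in> {min w p..max w p}" and gap: "{min w q<..<max w q} \<inter> N = {}"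
    using closest_point_between[OF closed_N assms(5,4)] .
  have "w \<noteq> q"
    using q(1) assms(4) by blast
  then have sweep: "band w \<subseteq> f ` {min w q<..<max w q}"
    using q(1) gap assms(4) by (intro band_subset_image_gap) (auto simp: min_def max_def)
  have gap_ab: "{min w q<..<max w q} \<subseteq> {a<..<b}"
    using assms(3,6) q(2) by auto
  define v where "v = (if w = a then f b else f a)"
  have v: "v \<in> {0..1}" "f w \<noteq> v"
    "min (f a) (f b) = min (f w) v" "max (f a) (f b) = max (f w) v"
    using assms(2,3) f_in_01 by (auto simp: v_def min.commute max.commute)
  obtain y where y: "y \<in> band w" "min (f w) v < y" "y < max (f w) v"
    using band_between[OF f_in_band[OF assms(4)] v(1,2)] by blast
  obtain x where x: "y = f x" "x \<in> {min w q<..<max w q}"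
    using subsetD[OF sweep y(1)] by (rule imageE)
  have "x \<in> {a<..<b} - N"
    using gap gap_ab x(2) by blast
  then show ?thesis
    using y(2,3) by (intro bexI[of _ x]) (simp_all add: v(3,4) x(1)[symmetric])
qed

lemma intermediate_value_endpoints_in_N:
  assumes "a < b" "f a \<noteq> f b" "a \<in> N" "b \<in> N"
  shows "\<exists>x\<in>{a<..<b} - N. min (f a) (f b) < f x \<and> f x < max (f a) (f b)"
proof -
  have "{a<..<b} \<noteq> {}" "interior {a<..<b} = {a<..<b}"
    using assms(1) by (auto simp: interior_open)
  then obtain w where w: "w \<in> {a<..<b}" "w \<notin> N"
    using interior_N interior_mono[of "{a<..<b}" N] by blast
  obtain q where q: "q \<in> N" "q \<in> {min w a..max w a}" and gap: "{min w q<..<max w q} \<inter> N = {}"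
    using closest_point_between[OF closed_N assms(3) w(2)] .
  have "w \<noteq> q"
    using q(1) w(2) by blast
  then have sweep: "band w \<subseteq> f ` {min w q<..<max w q}"
    using q(1) gap w(2) by (intro band_subset_image_gap) (auto simp: min_def max_def)
  have gap_ab: "{min w q<..<max w q} \<subseteq> {a<..<b}"
    using w(1) q(2) by auto
  have ends: "min (f a) (f b) = 0" "max (f a) (f b) = 1"
    using assms h_01[of a] h_01[of b] by (auto simp: f_def)
  define y where "y = (if w \<in> U then 1 - e / 2 else e / 2)"
  have y: "y \<in> band w" "0 < y" "y < 1"
    using e_pos e_less_1 by (auto simp: y_def band_def)
  obtain x where x: "y = f x" "x \<in> {min w q<..<max w q}"
    using subsetD[OF sweep y(1)] by (rule imageE)
  have "x \<in> {a<..<b} - N"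
    using gap gap_ab x(2) by blast
  then show ?thesis
    using y(2,3) by (intro bexI[of _ x]) (simp_all add: ends x(1)[symmetric])
qed

theorem swiatkowski_f: "swiatkowski f"
  unfolding swiatkowski_def cont_points_def
proof (intro allI impI)
  fix a b
  assume ab: "a < b \<and> f a \<noteq> f b"
  have "\<exists>x\<in>{a<..<b} - N. min (f a) (f b) < f x \<and> f x < max (f a) (f b)"
  proof (cases "{a..b} \<inter> N = {}")
    case True
    then show ?thesis using ab intermediate_value_without_N by blast
  next
    case False
    then obtain p where "p \<in> N" "p \<in> {a..b}"
      by blast
    then show ?thesis
    proof (cases "a \<in> N \<and> b \<in> N")
      case True
      then show ?thesis
        using ab intermediate_value_endpoints_in_N by blast
    next
      case False
      then obtain w where "w \<in> {a, b}" "w \<notin> N"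
        by blast
      then show ?thesis
        using ab intermediate_value_endpoint_off_N \<open>p \<in> N\<close> \<open>p \<in> {a..b}\<close> by blast
    qed
  qed
  then show "\<exists>x\<in>{a<..<b} \<inter> {x. isCont f x}. min (f a) (f b) < f x \<and> f x < max (f a) (f b)"
    using isCont_f by blast
qed

end

lemma swiatkowski_approximant_limit:
  assumes approx: "\<And>n. swiatkowski_approximant (N n) U (e n) h"
    and "incseq N" and "e \<longlonglongrightarrow> 0"
  shows "(\<lambda>n. swiatkowski_approximant.f (N n) U (e n) h x)
           \<longlonglongrightarrow> (if x \<in> (\<Union>n. N n) then h x else indicator U x)"
proof (cases "x \<in> (\<Union>n. N n)")
  case True
  then obtain k where "x \<in> N k"
    by blast
  then have "eventually (\<lambda>n. x \<in> N n) sequentially"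
    using \<open>incseq N\<close> by (auto simp: eventually_sequentially incseq_def)
  then have "eventually (\<lambda>n. swiatkowski_approximant.f (N n) U (e n) h x = h x) sequentially"
    by eventually_elim (simp add: swiatkowski_approximant.f_def[OF approx])
  then show ?thesis
    using True by (simp add: tendsto_eventually)
next
  case False
  have "\<bar>swiatkowski_approximant.f (N n) U (e n) h x - indicator U x\<bar> \<le> e n" for n
    using swiatkowski_approximant.dist_f_indicator[OF approx] False by (simp add: less_imp_le)
  then have "(\<lambda>n. swiatkowski_approximant.f (N n) U (e n) h x - indicator U x) \<longlonglongrightarrow> 0"
    by (intro Lim_null_comparison[OF _ \<open>e \<longlonglongrightarrow> 0\<close>]) simp
  then show ?thesis
    using False by (simp add: LIM_zero_iff)
qed

lemma baire_property_open_off_nowhere_dense: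
  fixes B :: "real set"
  assumes "baire_property B"
  obtains U N where "open U" "incseq N" "\<And>n. closed (N n)" "\<And>n. interior (N n) = {}"
    "\<And>n. N n \<noteq> {}" "\<And>n. frontier U \<subseteq> N n" "\<And>x. x \<notin> (\<Union>n. N n) \<Longrightarrow> x \<in> B \<longleftrightarrow> x \<in> U"
proof -
  obtain U M where "open U" "meager M" and B: "B = (U - M) \<union> (M - U)"
    using assms unfolding baire_property_def by blast
  obtain P where P: "incseq P" "\<And>n. closed (P n)" "\<And>n. interior (P n) = {}" "M \<subseteq> (\<Union>n. P n)"
    using meager_subset_incseq_closed[OF \<open>meager M\<close>] by blast
  \<comment> \<open>The point 0 only makes N n nonempty; note that infdist x {} = 0.\<close>
  define N where "N n = frontier U \<union> P n \<union> {0}" for n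
  have "interior (frontier U \<union> P n \<union> {0}) = interior (frontier U \<union> P n)" for n
    by (rule interior_closed_Un_empty_interior) (use P(2) in auto)
  also have "interior (frontier U \<union> P n) = interior (frontier U)" for n
    by (rule interior_closed_Un_empty_interior[OF frontier_closed P(3)])
  finally have interior_N: "interior (N n) = {}" for n
    unfolding N_def using interior_frontier_open[OF \<open>open U\<close>] by simp
  have closed_N: "closed (N n)" for n
    unfolding N_def using P(2) by (intro closed_Un frontier_closed) auto
  have mono_N: "incseq N"
    using P(1) by (auto simp: N_def incseq_def)
  have "N n \<noteq> {}" "frontier U \<subseteq> N n" for n
    by (auto simp: N_def)
  moreover have "x \<in> B \<longleftrightarrow> x \<in> U" if "x \<notin> (\<Union>n. N n)" for x
    using that P(4) by (auto simp: B N_def)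
  ultimately show ?thesis
    by (rule that[OF \<open>open U\<close> mono_N closed_N interior_N])
qed

theorem mainTheorem6:
  fixes B :: "real set"
  assumes "baire_property B"
  shows "\<exists>f :: nat \<Rightarrow> real \<Rightarrow> real. (\<forall>n. swiatkowski (f n)) \<and>
           (\<forall>x. (\<lambda>n. f n x) \<longlonglongrightarrow> indicator B x)"
proof -
  obtain U N where "open U" and mono_N: "incseq N" and N: "\<And>n. closed (N n)"
    "\<And>n. interior (N n) = {}" "\<And>n. N n \<noteq> {}" "\<And>n. frontier U \<subseteq> N n"
    and B_eq_U: "\<And>x. x \<notin> (\<Union>n. N n) \<Longrightarrow> x \<in> B \<longleftrightarrow> x \<in> U"
    using baire_property_open_off_nowhere_dense[OF assms] by blast
  define e where "e n = 1 / (real n + 2)" for n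
  have approx: "swiatkowski_approximant (N n) U (e n) (indicator B)" for n
    using N \<open>open U\<close> by unfold_locales (auto simp: e_def indicator_def)
  have e_to_0: "e \<longlonglongrightarrow> 0"
    unfolding e_def by real_asymp
  have limit_is_B: "(if x \<in> (\<Union>n. N n) then indicator B x else indicator U x) = indicator B x" for x
    using B_eq_U[of x] by (auto simp: indicator_def)
  define g where "g n = swiatkowski_approximant.f (N n) U (e n) (indicator B)" for n
  have "(\<lambda>n. g n x) \<longlonglongrightarrow> indicator B x" for x
    using swiatkowski_approximant_limit[OF approx mono_N e_to_0, where x = x]
    unfolding g_def limit_is_B .
  moreover have "swiatkowski (g n)" for n
    unfolding g_def by (rule swiatkowski_approximant.swiatkowski_f[OF approx])
  ultimately show ?thesis
    by blast
qed

end
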